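(* For all integers $n \ge 3$ and all $r \in \{0,1,2\}$, \[\mathrm{size}(\mathrm{MOD}_n^{3,r}) \le 3n-5-[(n+r) \equiv 0 \bmod 3]\,,\] where $[S]$ denotes $1$ if the statement $S$ is true and $0$ otherwise.
   Context: A Boolean straight line program of size $s$ on input variables $x_1,\dots,x_n$ is a sequence of $s$ instructions, each of the form $g \gets h \circ k$ where $\circ$ is an arbitrary binary Boolean operation (any of the 16 functions $\{0,1\}^2\to\{0,1\}$) and each operand $h,k$ is either an input variable or the result of an earlier instruction; designated instructions are outputs, and the program computes a function in the natural way (equivalently, a Boolean circuit with fan-in-two gates over the full binary basis). For a Boolean function $f$, $\mathrm{size}(f)$ is the minimum size of a straight line program computing $f$. For integers $m\ge 2$ and $r$, $\mathrm{MOD}_n^{m,r}\colon\{0,1\}^n\to\{0,1\}$ is defined by $\mathrm{MOD}_n^{m,r}(x_1,\dots,x_n)=1$ if $x_1+\dots+x_n \equiv r \pmod m$ and $0$ otherwise. *)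

theory Defs
  imports Main
begin

text \<open>Boolean straight line programs over the full binary basis.
  An operand is either an input variable x_i (i < n) or the result of an
  earlier instruction (referred to by its index in the program).\<close>

datatype operand = Inp nat | Gate nat

type_synonym instr = "(bool \<Rightarrow> bool \<Rightarrow> bool) \<times> operand \<times> operand"

fun operand_ok :: "nat \<Rightarrow> nat \<Rightarrow> operand \<Rightarrow> bool" where
  "operand_ok n j (Inp i) = (i < n)"
| "operand_ok n j (Gate g) = (g < j)"

definition slp_wf :: "nat \<Rightarrow> instr list \<Rightarrow> bool" where
  "slp_wf n P \<longleftrightarrow> (\<forall>j < length P. case P ! j of (f, h, k) \<Rightarrow>
      operand_ok n j h \<and> operand_ok n j k)"

fun opval :: "(nat \<Rightarrow> bool) \<Rightarrow> bool list \<Rightarrow> operand \<Rightarrow> bool" where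
  "opval x vs (Inp i) = x i"
| "opval x vs (Gate g) = vs ! g"

fun slp_vals_aux :: "(nat \<Rightarrow> bool) \<Rightarrow> bool list \<Rightarrow> instr list \<Rightarrow> bool list" where
  "slp_vals_aux x vs [] = vs"
| "slp_vals_aux x vs ((f, h, k) # P) = slp_vals_aux x (vs @ [f (opval x vs h) (opval x vs k)]) P"

definition slp_vals :: "(nat \<Rightarrow> bool) \<Rightarrow> instr list \<Rightarrow> bool list" where
  "slp_vals x P = slp_vals_aux x [] P"

text \<open>Program P with designated output o computes the n-ary Boolean function F
  (inputs given as x :: nat => bool, only x_0..x_(n-1) relevant).\<close>
definition slp_computes :: "nat \<Rightarrow> instr list \<Rightarrow> operand \<Rightarrow> ((nat \<Rightarrow> bool) \<Rightarrow> bool) \<Rightarrow> bool" where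
  "slp_computes n P out F \<longleftrightarrow> slp_wf n P \<and> operand_ok n (length P) out \<and>
     (\<forall>x. opval x (slp_vals x P) out = F x)"

definition slp_size :: "nat \<Rightarrow> ((nat \<Rightarrow> bool) \<Rightarrow> bool) \<Rightarrow> nat" where
  "slp_size n F = (LEAST s. \<exists>P out. length P = s \<and> slp_computes n P out F)"

text \<open>MOD_n^{m,r}(x_1..x_n) = 1 iff x_1 + ... + x_n = r (mod m); inputs indexed 0..n-1.\<close>
definition MOD_fun :: "nat \<Rightarrow> nat \<Rightarrow> nat \<Rightarrow> (nat \<Rightarrow> bool) \<Rightarrow> bool" where
  "MOD_fun n m r x \<longleftrightarrow> card {i. i < n \<and> x i} mod m = r mod m"

end

theory Submission
  imports Defs "HOL-Number_Theory.Cong"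
begin

(* A residue modulo 3 is carried on two wires, with 0, 1, 2 encoded as (_, False), (False, True),
   (True, True).  Three gates add an input bit plus the constant 1 to such a residue, and two
   gates add the last input bit and test whether the result is 2.  Two initial gates encode
   x_0 + x_1 + c for an arbitrary offset c, chosen so that the final test holds exactly when the
   weight of x is r modulo 3; this takes 2 + 3 (n - 3) + 2 = 3n - 5 gates.  When n + r = 0 (mod 3)
   the offset needed after reading x_0, x_1, x_2 is 0, so four gates encoding x_0 + x_1 + x_2
   replace the two initial gates and the first block, giving 3n - 6; for n = 3 a three-gate test
   for x_0 = x_1 = x_2 does it. *)

lemma slp_vals_aux_append:
  "slp_vals_aux x vs (P @ Q) = slp_vals_aux x (slp_vals_aux x vs P) Q"
  by (induction x vs P rule: slp_vals_aux.induct) auto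

lemma length_slp_vals_aux: "length (slp_vals_aux x vs P) = length vs + length P"
  by (induction x vs P rule: slp_vals_aux.induct) auto

lemma slp_vals_append: "slp_vals x (P @ Q) = slp_vals_aux x (slp_vals x P) Q"
  by (simp add: slp_vals_def slp_vals_aux_append)

lemma length_slp_vals: "length (slp_vals x P) = length P"
  by (simp add: slp_vals_def length_slp_vals_aux)

lemma slp_size_le_length: "slp_computes n P out F \<Longrightarrow> slp_size n F \<le> length P"
  unfolding slp_size_def by (rule Least_le) blast

definition slp_wf_from :: "nat \<Rightarrow> nat \<Rightarrow> instr list \<Rightarrow> bool" where
  "slp_wf_from n L P \<longleftrightarrow> (\<forall>j < length P. case P ! j of (f, h, k) \<Rightarrow>
      operand_ok n (L + j) h \<and> operand_ok n (L + j) k)"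

lemma slp_wf_iff_slp_wf_from: "slp_wf n P \<longleftrightarrow> slp_wf_from n 0 P"
  by (simp add: slp_wf_def slp_wf_from_def)

lemma slp_wf_from_Nil [simp]: "slp_wf_from n L []"
  by (simp add: slp_wf_from_def)

lemma slp_wf_from_Cons [simp]:
  "slp_wf_from n L ((f, h, k) # P) \<longleftrightarrow>
     operand_ok n L h \<and> operand_ok n L k \<and> slp_wf_from n (Suc L) P"
  by (auto simp: slp_wf_from_def less_Suc_eq_0_disj)

lemma slp_wf_from_append [simp]:
  "slp_wf_from n L (P @ Q) \<longleftrightarrow> slp_wf_from n L P \<and> slp_wf_from n (L + length P) Q"
  by (induction P arbitrary: L) auto

definition weight :: "(nat \<Rightarrow> bool) \<Rightarrow> nat \<Rightarrow> nat" where
  "weight x k = (\<Sum>j<k. of_bool (x j))"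

lemma weight_Suc: "weight x (Suc k) = weight x k + of_bool (x k)"
  by (simp add: weight_def)

lemma weight_2: "weight x 2 = of_bool (x 0) + of_bool (x 1)"
  by (simp add: weight_def numeral_2_eq_2)

lemma weight_3: "weight x 3 = of_bool (x 0) + of_bool (x 1) + of_bool (x 2)"
  by (simp add: weight_def numeral_3_eq_3 numeral_2_eq_2)

lemma MOD_fun_iff_weight: "MOD_fun n m r x \<longleftrightarrow> weight x n mod m = r mod m"
proof -
  have "{i. i < n \<and> x i} = {..<n} \<inter> {j. x j}" by auto
  then show ?thesis by (simp add: MOD_fun_def weight_def)
qed

definition enc3 :: "bool \<Rightarrow> bool \<Rightarrow> nat" where
  "enc3 a b = (if b then (if a then 2 else 1) else 0)"

definition last_residue :: "bool list \<Rightarrow> nat" where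
  "last_residue vs = enc3 (vs ! (length vs - 2)) (vs ! (length vs - 1))"

lemma enc3_add_Suc: "enc3 (b \<noteq> y) (\<not> (b \<and> (a \<noteq> y))) = (enc3 a b + of_bool y + 1) mod 3"
  by (cases a; cases b; cases y) (auto simp: enc3_def)

lemma enc3_add_eq_2: "(b \<and> (a \<noteq> y)) \<longleftrightarrow> (enc3 a b + of_bool y) mod 3 = 2"
  by (cases a; cases b; cases y) (auto simp: enc3_def)

definition add_input_gates :: "nat \<Rightarrow> nat \<Rightarrow> instr list" where
  "add_input_gates L i =
     [((\<noteq>), Gate (L - 2), Inp i), ((\<noteq>), Gate (L - 1), Inp i), (\<lambda>p q. \<not> (p \<and> q), Gate (L - 1), Gate L)]"

fun add_inputs :: "nat \<Rightarrow> nat \<Rightarrow> nat \<Rightarrow> instr list" where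
  "add_inputs L i 0 = []"
| "add_inputs L i (Suc m) = add_input_gates L i @ add_inputs (L + 3) (Suc i) m"

definition test_residue_gates :: "nat \<Rightarrow> nat \<Rightarrow> instr list" where
  "test_residue_gates L j = [((\<noteq>), Gate (L - 2), Inp j), ((\<and>), Gate (L - 1), Gate L)]"

lemma length_add_inputs [simp]: "length (add_inputs L i m) = 3 * m"
  by (induction m arbitrary: L i) (auto simp: add_input_gates_def)

lemma slp_wf_from_add_inputs: "2 \<le> L \<Longrightarrow> i + m \<le> n \<Longrightarrow> slp_wf_from n L (add_inputs L i m)"
  by (induction m arbitrary: L i) (auto simp: add_input_gates_def numeral_3_eq_3)

lemma last_residue_add_input_gates:
  assumes "length vs = L" and "2 \<le> L"
  shows "last_residue (slp_vals_aux x vs (add_input_gates L i)) = (last_residue vs + of_bool (x i) + 1) mod 3"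
  using assms enc3_add_Suc[of "vs ! (L - 1)" "x i" "vs ! (L - 2)"]
  by (simp add: add_input_gates_def last_residue_def nth_append)

lemma last_residue_add_inputs:
  assumes "length vs = L" and "2 \<le> L" and "last_residue vs = (c + weight x i) mod 3"
  shows "last_residue (slp_vals_aux x vs (add_inputs L i m)) = (c + weight x (i + m) + m) mod 3"
  using assms
proof (induction m arbitrary: L i vs c)
  case 0
  then show ?case by simp
next
  case (Suc m)
  let ?vs' = "slp_vals_aux x vs (add_input_gates L i)"
  have "last_residue ?vs' = (Suc c + weight x (Suc i)) mod 3"
    using Suc.prems by (simp add: last_residue_add_input_gates weight_Suc mod_simps)
  moreover have "length ?vs' = L + 3"
    using Suc.prems by (simp add: length_slp_vals_aux add_input_gates_def)
  ultimately show ?case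
    using Suc.IH[of ?vs' "L + 3" "Suc c" "Suc i"] Suc.prems by (simp add: slp_vals_aux_append)
qed

lemma test_residue_gates_value:
  assumes "length vs = L" and "2 \<le> L"
  shows "opval x (slp_vals_aux x vs (test_residue_gates L j)) (Gate (L + 1)) \<longleftrightarrow>
           (last_residue vs + of_bool (x j)) mod 3 = 2"
  using assms enc3_add_eq_2[of "vs ! (L - 1)" "vs ! (L - 2)" "x j"]
  by (simp add: test_residue_gates_def last_residue_def nth_append)

lemma slp_computes_residue_test:
  assumes wf: "slp_wf n I" and len: "2 \<le> length I" and n: "k + m + 1 = n"
    and init: "\<And>x. last_residue (slp_vals x I) = (c + weight x k) mod 3"
  shows "slp_computes n
           (I @ add_inputs (length I) k m @ test_residue_gates (length I + 3 * m) (n - 1))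
           (Gate (length I + 3 * m + 1)) (\<lambda>x. (c + weight x n + m) mod 3 = 2)"
  unfolding slp_computes_def
proof (intro conjI allI)
  show "slp_wf n (I @ add_inputs (length I) k m @ test_residue_gates (length I + 3 * m) (n - 1))"
    using wf len n slp_wf_from_add_inputs[of "length I" k m n]
    by (auto simp: slp_wf_iff_slp_wf_from test_residue_gates_def)
next
  fix x
  let ?W = "slp_vals_aux x (slp_vals x I) (add_inputs (length I) k m)"
  have W: "length ?W = length I + 3 * m" "last_residue ?W = (c + weight x (k + m) + m) mod 3"
    using len init by (simp_all add: last_residue_add_inputs length_slp_vals_aux length_slp_vals)
  have "weight x n = weight x (k + m) + of_bool (x (n - 1))"
    using n by (auto simp: weight_Suc)
  then have "(last_residue ?W + of_bool (x (n - 1))) mod 3 = (c + weight x n + m) mod 3"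
    by (simp add: W(2) mod_simps add_ac)
  with W(1) len test_residue_gates_value[of ?W]
  show "opval x (slp_vals x (I @ add_inputs (length I) k m @
        test_residue_gates (length I + 3 * m) (n - 1))) (Gate (length I + 3 * m + 1)) \<longleftrightarrow>
      (c + weight x n + m) mod 3 = 2"
    by (simp add: slp_vals_append slp_vals_aux_append)
qed (use len in \<open>simp add: test_residue_gates_def\<close>)

lemma mod_offset_cancel:
  fixes c m r w q :: nat
  assumes "(c + m + r) mod q = s"
  shows "(c + w + m) mod q = s \<longleftrightarrow> w mod q = r mod q"
proof -
  have "(c + w + m) mod q = s \<longleftrightarrow> [w + (c + m) = r + (c + m)] (mod q)"
    using assms by (simp add: cong_def add_ac)
  also have "\<dots> \<longleftrightarrow> [w = r] (mod q)"
    by (rule cong_add_rcancel_nat)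
  finally show ?thesis
    by (simp add: cong_def)
qed

lemma slp_size_MOD3_le:
  assumes "slp_wf n I" and "2 \<le> length I" and "k + m + 1 = n"
    and "\<And>x. last_residue (slp_vals x I) = (c + weight x k) mod 3"
    and "(c + m + r) mod 3 = 2"
  shows "slp_size n (MOD_fun n 3 r) \<le> length I + 3 * m + 2"
proof -
  have "(\<lambda>x. (c + weight x n + m) mod 3 = 2) = MOD_fun n 3 r"
    by (simp add: fun_eq_iff MOD_fun_iff_weight mod_offset_cancel[OF assms(5)])
  then show ?thesis
    using slp_size_le_length[OF slp_computes_residue_test[OF assms(1-4)]]
    by (simp add: test_residue_gates_def)
qed

definition offset_pair_gates :: "nat \<Rightarrow> instr list" where
  "offset_pair_gates c =
     [(\<lambda>p q. (of_bool p + of_bool q + c) mod 3 = (2::nat), Inp 0, Inp 1),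
      (\<lambda>p q. (of_bool p + of_bool q + c) mod 3 \<noteq> (0::nat), Inp 0, Inp 1)]"

lemma slp_wf_offset_pair_gates: "2 \<le> n \<Longrightarrow> slp_wf n (offset_pair_gates c)"
  by (simp add: offset_pair_gates_def slp_wf_iff_slp_wf_from)

lemma enc3_mod3: "enc3 (s mod 3 = 2) (s mod 3 \<noteq> 0) = s mod 3"
  unfolding enc3_def by presburger

lemma last_residue_offset_pair_gates:
  "last_residue (slp_vals x (offset_pair_gates c)) = (c + weight x 2) mod 3"
  using enc3_mod3[of "of_bool (x 0) + of_bool (x 1) + c"]
  by (simp add: offset_pair_gates_def slp_vals_def last_residue_def weight_2 add_ac)

definition triple_sum_gates :: "instr list" where
  "triple_sum_gates =
     [((\<noteq>), Inp 0, Inp 1), ((\<noteq>), Inp 0, Inp 2), ((=), Inp 1, Gate 1), ((\<or>), Gate 0, Gate 1)]"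

lemma slp_wf_triple_sum_gates: "3 \<le> n \<Longrightarrow> slp_wf n triple_sum_gates"
  by (simp add: triple_sum_gates_def slp_wf_iff_slp_wf_from)

lemma last_residue_triple_sum_gates:
  "last_residue (slp_vals x triple_sum_gates) = weight x 3 mod 3"
  by (cases "x 0"; cases "x 1"; cases "x 2")
    (simp_all add: triple_sum_gates_def slp_vals_def last_residue_def enc3_def weight_3)

definition all_equal3_gates :: "instr list" where
  "all_equal3_gates = [((\<noteq>), Inp 0, Inp 1), ((\<noteq>), Inp 1, Inp 2), (\<lambda>p q. \<not> p \<and> \<not> q, Gate 0, Gate 1)]"

lemma slp_computes_all_equal3_gates: "slp_computes 3 all_equal3_gates (Gate 2) (MOD_fun 3 3 0)"
  unfolding slp_computes_def
proof (intro conjI allI)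
  fix x
  show "opval x (slp_vals x all_equal3_gates) (Gate 2) = MOD_fun 3 3 0 x"
    by (cases "x 0"; cases "x 1"; cases "x 2")
      (simp_all add: all_equal3_gates_def slp_vals_def MOD_fun_iff_weight weight_3)
qed (simp_all add: all_equal3_gates_def slp_wf_iff_slp_wf_from)

lemma slp_size_MOD3_le_pair:
  fixes n r :: nat
  assumes "3 \<le> n"
  shows "slp_size n (MOD_fun n 3 r) \<le> 3 * n - 5"
proof -
  have "((2 + 2 * t) mod 3 + t) mod 3 = 2" for t :: nat
    by presburger
  from this[of "n - 3 + r"]
  have offset: "((2 + 2 * (n - 3 + r)) mod 3 + (n - 3) + r) mod 3 = 2"
    by (simp only: add.assoc)
  have "slp_size n (MOD_fun n 3 r)
          \<le> length (offset_pair_gates ((2 + 2 * (n - 3 + r)) mod 3)) + 3 * (n - 3) + 2"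
    using assms
    by (intro slp_size_MOD3_le[where k = 2,
          OF slp_wf_offset_pair_gates _ _ last_residue_offset_pair_gates offset])
      (simp_all add: offset_pair_gates_def)
  with assms show ?thesis
    by (simp add: offset_pair_gates_def)
qed

lemma slp_size_MOD3_le_triple:
  fixes n r :: nat
  assumes "4 \<le> n" and "(n + r) mod 3 = 0"
  shows "slp_size n (MOD_fun n 3 r) \<le> 3 * n - 6"
proof -
  have "(s + 4) mod 3 = 0 \<Longrightarrow> s mod 3 = 2" for s :: nat
    by presburger
  moreover have "n - 4 + r + 4 = n + r"
    using assms(1) by simp
  ultimately have offset: "(0 + (n - 4) + r) mod 3 = 2"
    using assms(2) by simp
  have "slp_size n (MOD_fun n 3 r) \<le> length triple_sum_gates + 3 * (n - 4) + 2"
    using assms(1)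
    by (intro slp_size_MOD3_le[where k = 3, OF slp_wf_triple_sum_gates _ _ _ offset])
      (simp_all add: last_residue_triple_sum_gates, simp add: triple_sum_gates_def)
  with assms(1) show ?thesis
    by (simp add: triple_sum_gates_def)
qed

lemma slp_size_MOD_3_3_0: "slp_size 3 (MOD_fun 3 3 0) \<le> 3"
  using slp_size_le_length[OF slp_computes_all_equal3_gates] by (simp add: all_equal3_gates_def)

theorem theorem1:
  fixes n r :: nat
  assumes "n \<ge> 3" and "r \<le> 2"
  shows "slp_size n (MOD_fun n 3 r) \<le> 3 * n - 5 - (if (n + r) mod 3 = 0 then 1 else 0)"
proof (cases "(n + r) mod 3 = 0")
  case False
  with assms show ?thesis
    using slp_size_MOD3_le_pair by simp
next
  case True
  show ?thesis
  proof (cases "n = 3")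
    case True
    with \<open>(n + r) mod 3 = 0\<close> \<open>r \<le> 2\<close> have "r = 0"
      by presburger
    with \<open>n = 3\<close> show ?thesis
      using slp_size_MOD_3_3_0 by simp
  next
    case False
    with assms \<open>(n + r) mod 3 = 0\<close> show ?thesis
      using slp_size_MOD3_le_triple[of n r] by simp
  qed
qed

end
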